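(* Let $n\ge2$, $0<m\le L$, $\kappa=L/m$, let $\rho\in(0,1)$ satisfy $1/(1-\rho)\ge(\sqrt\kappa+1)/2$, let $c=\dfrac{\kappa-(1+\rho)/(1-\rho)}{\rho\,(\kappa+(1+\rho)/(1-\rho))}$, and consider the two-step momentum algorithm with parameters $\alpha=(1+\rho)(1+c\rho)/L$, $\beta=c\rho^2$, $\gamma=0$. Then $$J_{\max}=n\hat J(m)=n\hat J(L),\qquad J_{\min}=2\hat J(m)+(n-2)\hat J(\hat\lambda),$$ where $\hat\lambda=(m+L)/2$, $\hat J(m)=\dfrac{\sigma_w^2(\kappa+1)}{2(1-c\rho^2)(1+\rho)(1+c\rho)}$ and $\hat J(\hat\lambda)=\dfrac{\sigma_w^2}{(1+c\rho^2)(1-c\rho^2)}$.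
   Context: $\mathcal{Q}_m^L$ is the class of quadratic functions $f(x)=\tfrac12x^TQx-q^Tx$ on $\mathbb{R}^n$ with $q\in\mathbb{R}^n$, $Q=Q^T\succ0$ whose largest eigenvalue is $L$ and smallest is $m$; $x^\star$ is the minimizer. The noisy two-step momentum algorithm is $x^{t+2}=x^{t+1}+\beta(x^{t+1}-x^t)-\alpha\nabla f\big(x^{t+1}+\gamma(x^{t+1}-x^t)\big)+\sigma_w w^t$, with $w^t$ white noise, $\mathbb{E}[w^t]=0$, $\mathbb{E}[w^t(w^\tau)^T]=I\delta(t-\tau)$, $\sigma_w\ge0$. For $\lambda>0$ let $a(\lambda)=\beta-\gamma\alpha\lambda$, $b(\lambda)=(1+\gamma)\alpha\lambda-(1+\beta)$, $d=a+b+1$, $l=a-b+1$, $h=1-a$, and $\hat J(\lambda)=\sigma_w^2(d+l)/(2dhl)$ (evaluated at $\lambda$). Noise amplification $J=\lim_{t\to\infty}\frac1t\sum_{k=0}^t\mathbb{E}\|x^k-x^\star\|_2^2$; $J_{\max}=\max_{f\in\mathcal{Q}_m^L}J$, $J_{\min}=\min_{f\in\mathcal{Q}_m^L}J$. *)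

theory Defs
  imports "HOL-Probability.Probability"
begin

definition mat_eigenvalue :: "real^'n^'n \<Rightarrow> real \<Rightarrow> bool" where
  "mat_eigenvalue Q lam \<longleftrightarrow> (\<exists>v. v \<noteq> 0 \<and> Q *v v = lam *\<^sub>R v)"

text \<open>The class Q_m^L, a quadratic f(x) = 1/2 x^T Q x - q^T x represented by the pair (Q,q).\<close>
definition quad_class :: "real \<Rightarrow> real \<Rightarrow> ((real^'n^'n) \<times> (real^'n)) set" where
  "quad_class m L = {(Q, q). transpose Q = Q
      \<and> (\<forall>x. x \<noteq> 0 \<longrightarrow> x \<bullet> (Q *v x) > 0)
      \<and> mat_eigenvalue Q L \<and> (\<forall>lam. mat_eigenvalue Q lam \<longrightarrow> lam \<le> L)
      \<and> mat_eigenvalue Q m \<and> (\<forall>lam. mat_eigenvalue Q lam \<longrightarrow> m \<le> lam)}"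

definition quad_fun :: "real^'n^'n \<Rightarrow> real^'n \<Rightarrow> real^'n \<Rightarrow> real" where
  "quad_fun Q q x = (1/2) * (x \<bullet> (Q *v x)) - q \<bullet> x"

text \<open>Gradient of quad_fun Q q (Q symmetric).\<close>
definition quad_grad :: "real^'n^'n \<Rightarrow> real^'n \<Rightarrow> real^'n \<Rightarrow> real^'n" where
  "quad_grad Q q x = Q *v x - q"

definition quad_argmin :: "real^'n^'n \<Rightarrow> real^'n \<Rightarrow> real^'n" where
  "quad_argmin Q q = (THE x. \<forall>y. quad_fun Q q x \<le> quad_fun Q q y)"

fun mom_state :: "real \<Rightarrow> real \<Rightarrow> real \<Rightarrow> real \<Rightarrow> real^'n^'n \<Rightarrow> real^'n
    \<Rightarrow> (nat \<Rightarrow> real^'n) \<Rightarrow> real^'n \<Rightarrow> real^'n \<Rightarrow> nat \<Rightarrow> (real^'n) \<times> (real^'n)" where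
  "mom_state \<alpha> \<beta> \<gamma> \<sigma> Q q w x0 x1 0 = (x0, x1)"
| "mom_state \<alpha> \<beta> \<gamma> \<sigma> Q q w x0 x1 (Suc t) =
     (let (a, b) = mom_state \<alpha> \<beta> \<gamma> \<sigma> Q q w x0 x1 t in
      (b, b + \<beta> *\<^sub>R (b - a) - \<alpha> *\<^sub>R quad_grad Q q (b + \<gamma> *\<^sub>R (b - a)) + \<sigma> *\<^sub>R w t))"

definition mom_iter :: "real \<Rightarrow> real \<Rightarrow> real \<Rightarrow> real \<Rightarrow> real^'n^'n \<Rightarrow> real^'n
    \<Rightarrow> (nat \<Rightarrow> real^'n) \<Rightarrow> real^'n \<Rightarrow> real^'n \<Rightarrow> nat \<Rightarrow> real^'n" where
  "mom_iter \<alpha> \<beta> \<gamma> \<sigma> Q q w x0 x1 k = fst (mom_state \<alpha> \<beta> \<gamma> \<sigma> Q q w x0 x1 k)"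

definition white_noise :: "'a measure \<Rightarrow> (nat \<Rightarrow> 'a \<Rightarrow> real^'n) \<Rightarrow> bool" where
  "white_noise M w \<longleftrightarrow> prob_space M \<and>
     (\<forall>t. w t \<in> borel_measurable M) \<and>
     (\<forall>t i. integrable M (\<lambda>\<omega>. w t \<omega> $ i) \<and> (LINT \<omega>|M. w t \<omega> $ i) = 0) \<and>
     (\<forall>t s i j. integrable M (\<lambda>\<omega>. w t \<omega> $ i * w s \<omega> $ j) \<and>
        (LINT \<omega>|M. w t \<omega> $ i * w s \<omega> $ j) = (if t = s \<and> i = j then 1 else 0))"

definition noise_avg :: "'a measure \<Rightarrow> (nat \<Rightarrow> 'a \<Rightarrow> real^'n) \<Rightarrow> real \<Rightarrow> real \<Rightarrow> real \<Rightarrow> real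
    \<Rightarrow> real^'n^'n \<Rightarrow> real^'n \<Rightarrow> real^'n \<Rightarrow> real^'n \<Rightarrow> nat \<Rightarrow> real" where
  "noise_avg M w \<alpha> \<beta> \<gamma> \<sigma> Q q x0 x1 t =
     (1 / real t) * (\<Sum>k\<le>t. LINT \<omega>|M.
        (norm (mom_iter \<alpha> \<beta> \<gamma> \<sigma> Q q (\<lambda>s. w s \<omega>) x0 x1 k - quad_argmin Q q))\<^sup>2)"

definition noise_amp :: "'a measure \<Rightarrow> (nat \<Rightarrow> 'a \<Rightarrow> real^'n) \<Rightarrow> real \<Rightarrow> real \<Rightarrow> real \<Rightarrow> real
    \<Rightarrow> real^'n^'n \<Rightarrow> real^'n \<Rightarrow> real^'n \<Rightarrow> real^'n \<Rightarrow> real" where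
  "noise_amp M w \<alpha> \<beta> \<gamma> \<sigma> Q q x0 x1 = lim (noise_avg M w \<alpha> \<beta> \<gamma> \<sigma> Q q x0 x1)"

definition Jhat :: "real \<Rightarrow> real \<Rightarrow> real \<Rightarrow> real \<Rightarrow> real \<Rightarrow> real" where
  "Jhat \<alpha> \<beta> \<gamma> \<sigma> lam =
     (let a = \<beta> - \<gamma> * \<alpha> * lam; b = (1 + \<gamma>) * \<alpha> * lam - (1 + \<beta>);
          d = a + b + 1; l = a - b + 1; h = 1 - a
      in \<sigma>\<^sup>2 * (d + l) / (2 * d * h * l))"

end

theory Submission
  imports Defs
begin

text \<open>Diagonalise \<open>Q\<close> in an orthonormal eigenbasis. Along an eigenvector \<open>u\<close> with eigenvalue
  \<open>\<lambda>\<close>, the error coordinate \<open>\<psi>\<^sub>k = u \<bullet> (x\<^sup>k - x\<^sup>\<star>)\<close> obeys the scalar recursion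
  \<open>\<psi>\<^sub>k\<^sub>+\<^sub>2 = p \<psi>\<^sub>k\<^sub>+\<^sub>1 + r \<psi>\<^sub>k + \<sigma>\<^sub>w u \<bullet> w\<^sub>k\<close> with \<open>p = -b(\<lambda>)\<close>, \<open>r = -a(\<lambda>)\<close>, driven by unit white
  noise. When it is stable, \<open>E \<psi>\<^sub>k\<^sup>2\<close> converges to \<open>\<sigma>\<^sub>w\<^sup>2\<close> times the energy of its impulse
  response, which a quadratic Lyapunov function evaluates to \<open>Jhat(\<lambda>) / \<sigma>\<^sub>w\<^sup>2\<close>; Cesaro averaging
  then gives \<open>J = \<Sum>\<^sub>\<lambda> Jhat(\<lambda>)\<close> over the spectrum of \<open>Q\<close>, and diagonal matrices realise every
  spectrum in \<open>[m, L]\<close> containing \<open>m\<close> and \<open>L\<close>. The given parameters satisfy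
  \<open>\<alpha> (m + L) = 2 (1 + \<beta>)\<close>, so \<open>Jhat\<close> is a positive constant divided by a concave parabola in
  \<open>\<lambda>\<close> with vertex at \<open>(m + L) / 2\<close>: it is largest at \<open>m\<close> and \<open>L\<close> and smallest at the
  midpoint, which yields \<open>J\<^sub>m\<^sub>a\<^sub>x\<close> and \<open>J\<^sub>m\<^sub>i\<^sub>n\<close>.\<close>

section \<open>Symmetric matrices\<close>

lemma inner_matrix_vector_symmetric:
  fixes Q :: "real^'n^'n"
  assumes "transpose Q = Q"
  shows "x \<bullet> (Q *v y) = (Q *v x) \<bullet> y"
  by (metis assms dot_lmul_matrix transpose_matrix_vector)

lemma linear_coeff_eq_0_if_quadratic_nonpos:
  fixes b K :: real
  assumes nonpos: "\<And>t. 2 * t * b + t\<^sup>2 * K \<le> 0"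
  shows "b = 0"
proof -
  define s where "s = \<bar>K\<bar> + 1"
  have s: "s > 0" "2 * s + K > 0"
    using abs_ge_minus_self[of K] by (auto simp: s_def)
  have "2 * (b / s) * b + (b / s)\<^sup>2 * K \<le> 0" by (rule nonpos)
  then have "b\<^sup>2 * (2 * s + K) \<le> 0"
    using s by (simp add: field_simps power2_eq_square)
  then show ?thesis using s by (simp add: mult_le_0_iff)
qed

lemma symmetric_rayleigh_max_eigenvector:
  fixes Q :: "real^'n^'n"
  assumes sym: "transpose Q = Q" and S: "subspace S" and inv: "\<And>x. x \<in> S \<Longrightarrow> Q *v x \<in> S"
    and v: "v \<in> S" and max: "\<And>y. y \<in> S \<Longrightarrow> y \<bullet> (Q *v y) \<le> \<mu> * (y \<bullet> y)"
    and attained: "v \<bullet> (Q *v v) = \<mu> * (v \<bullet> v)"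
  shows "Q *v v = \<mu> *\<^sub>R v"
proof -
  \<comment> \<open>Perturbing \<open>v\<close> along \<open>z\<close> keeps the Rayleigh bound only if the linear term
    \<open>2 t \<parallel>z\<parallel>\<^sup>2\<close> vanishes.\<close>
  define z where "z = Q *v v - \<mu> *\<^sub>R v"
  have z: "z \<in> S" unfolding z_def using S v inv by (simp add: subspace_diff subspace_scale)
  have "2 * t * (z \<bullet> z) + t\<^sup>2 * (z \<bullet> (Q *v z) - \<mu> * (z \<bullet> z)) \<le> 0" for t
  proof -
    have "(v + t *\<^sub>R z) \<bullet> (Q *v (v + t *\<^sub>R z))
        = v \<bullet> (Q *v v) + 2 * t * (z \<bullet> (Q *v v)) + t\<^sup>2 * (z \<bullet> (Q *v z))"
      using inner_matrix_vector_symmetric[OF sym, of v z]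
      by (simp add: matrix_vector_right_distrib matrix_vector_mult_scaleR inner_add_left
          inner_add_right inner_commute power2_eq_square algebra_simps)
    moreover have "(v + t *\<^sub>R z) \<bullet> (v + t *\<^sub>R z) = v \<bullet> v + 2 * t * (z \<bullet> v) + t\<^sup>2 * (z \<bullet> z)"
      by (simp add: inner_add_left inner_add_right inner_commute power2_eq_square algebra_simps)
    moreover have "(v + t *\<^sub>R z) \<bullet> (Q *v (v + t *\<^sub>R z)) \<le> \<mu> * ((v + t *\<^sub>R z) \<bullet> (v + t *\<^sub>R z))"
      using S v z by (intro max) (simp add: subspace_add subspace_scale)
    ultimately have "2 * t * (z \<bullet> (Q *v v) - \<mu> * (z \<bullet> v)) + t\<^sup>2 * (z \<bullet> (Q *v z) - \<mu> * (z \<bullet> z)) \<le> 0"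
      using attained by (simp add: algebra_simps)
    moreover have "z \<bullet> (Q *v v) - \<mu> * (z \<bullet> v) = z \<bullet> z"
      by (simp add: z_def inner_diff_right)
    ultimately show ?thesis by simp
  qed
  then have "z \<bullet> z = 0" by (rule linear_coeff_eq_0_if_quadratic_nonpos)
  then show ?thesis by (simp add: z_def)
qed

lemma symmetric_invariant_subspace_eigenvector:
  fixes Q :: "real^'n^'n"
  assumes sym: "transpose Q = Q" and S: "subspace S" and inv: "\<And>x. x \<in> S \<Longrightarrow> Q *v x \<in> S"
    and nontriv: "S \<noteq> {0}"
  obtains v where "v \<in> S" "norm v = 1" "Q *v v = (v \<bullet> (Q *v v)) *\<^sub>R v"
proof -
  define K where "K = S \<inter> sphere 0 1"
  obtain x where x: "x \<in> S" "x \<noteq> 0" using S nontriv subspace_0 by blast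
  then have "(1 / norm x) *\<^sub>R x \<in> K" unfolding K_def using S by (simp add: subspace_scale)
  then have "K \<noteq> {}" by blast
  moreover have "compact K"
    unfolding K_def by (intro closed_Int_compact closed_subspace S compact_sphere)
  moreover have "continuous_on K (\<lambda>y. y \<bullet> (Q *v y))"
    by (intro continuous_on_inner continuous_on_id matrix_vector_mult_linear_continuous_on)
  ultimately obtain v where v: "v \<in> K" and vmax: "\<And>y. y \<in> K \<Longrightarrow> y \<bullet> (Q *v y) \<le> v \<bullet> (Q *v v)"
    using continuous_attains_sup by metis
  have vS: "v \<in> S" and vv: "v \<bullet> v = 1" using v unfolding K_def by (auto simp: norm_eq_1)
  have "y \<bullet> (Q *v y) \<le> (v \<bullet> (Q *v v)) * (y \<bullet> y)" if y: "y \<in> S" for y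
  proof (cases "y = 0")
    case False
    then have "(1 / norm y) *\<^sub>R y \<in> K" unfolding K_def using y S by (simp add: subspace_scale)
    then have "((1 / norm y) *\<^sub>R y) \<bullet> (Q *v ((1 / norm y) *\<^sub>R y)) \<le> v \<bullet> (Q *v v)"
      by (rule vmax)
    then show ?thesis using False
      by (simp add: matrix_vector_mult_scaleR power2_norm_eq_inner[symmetric] power2_eq_square
          divide_le_eq mult.commute)
  qed simp
  then have "Q *v v = (v \<bullet> (Q *v v)) *\<^sub>R v"
    using symmetric_rayleigh_max_eigenvector[OF sym S inv vS] vv by simp
  then show ?thesis using that vS vv by (simp add: norm_eq_1)
qed

lemma span_insert_orthogonal_section:
  assumes S: "subspace S" and v: "v \<in> S" "norm v = 1"
    and B: "span B = S \<inter> {y. v \<bullet> y = 0}"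
  shows "span (insert v B) = S"
proof
  show "span (insert v B) \<subseteq> S"
    using B S v span_superset[of B] by (intro span_minimal) auto
  show "S \<subseteq> span (insert v B)"
  proof
    fix z assume "z \<in> S"
    then have "z - (v \<bullet> z) *\<^sub>R v \<in> span B"
      using B S v by (simp add: subspace_diff subspace_scale inner_diff_right norm_eq_1)
    then show "z \<in> span (insert v B)" by (auto simp: span_insert)
  qed
qed

lemma symmetric_invariant_subspace_eigenbasis:
  fixes Q :: "real^'n^'n"
  assumes sym: "transpose Q = Q"
  shows "subspace S \<Longrightarrow> (\<And>x. x \<in> S \<Longrightarrow> Q *v x \<in> S) \<Longrightarrow>
    \<exists>B\<subseteq>S. finite B \<and> pairwise orthogonal B \<and> span B = S
      \<and> (\<forall>u\<in>B. norm u = 1 \<and> Q *v u = (u \<bullet> (Q *v u)) *\<^sub>R u)"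
proof (induction "dim S" arbitrary: S rule: less_induct)
  case less
  show ?case
  proof (cases "S = {0}")
    case True
    then show ?thesis by (intro exI[of _ "{}"]) auto
  next
    case False
    obtain v where v: "v \<in> S" "norm v = 1" and ev: "Q *v v = (v \<bullet> (Q *v v)) *\<^sub>R v"
      using symmetric_invariant_subspace_eigenvector[OF sym less.prems False] by blast
    define S' where "S' = S \<inter> {y. v \<bullet> y = 0}"
    have S': "subspace S'" unfolding S'_def by (intro subspace_inter less.prems(1) subspace_hyperplane)
    have inv': "Q *v y \<in> S'" if "y \<in> S'" for y
    proof -
      have "v \<bullet> (Q *v y) = (v \<bullet> (Q *v v)) * (v \<bullet> y)"
        by (subst inner_matrix_vector_symmetric[OF sym], subst ev) simp
      then show ?thesis using that less.prems(2) unfolding S'_def by auto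
    qed
    have "v \<notin> S'" using v(2) unfolding S'_def by (auto simp: norm_eq_1)
    then have "S' \<subset> S" using v(1) unfolding S'_def by blast
    then have "dim S' < dim S"
      using dim_psubset[of S' S] S' less.prems(1) by (metis span_eq_iff)
    then obtain B' where B': "B' \<subseteq> S'" "finite B'" "pairwise orthogonal B'" "span B' = S'"
        "\<forall>u\<in>B'. norm u = 1 \<and> Q *v u = (u \<bullet> (Q *v u)) *\<^sub>R u"
      using less.hyps[OF _ S' inv'] by blast
    have "span (insert v B') = S"
      using B'(4) v less.prems(1) unfolding S'_def by (intro span_insert_orthogonal_section) auto
    moreover have "pairwise orthogonal (insert v B')"
      using B'(1,3) \<open>v \<notin> S'\<close> unfolding S'_def
      by (auto simp: pairwise_insert orthogonal_def inner_commute)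
    ultimately show ?thesis using B' v ev less.prems(1) unfolding S'_def by (auto intro!: exI[of _ "insert v B'"])
  qed
qed

definition orthonormal_eigenbasis :: "real^'n^'n \<Rightarrow> ('n \<Rightarrow> real^'n) \<Rightarrow> ('n \<Rightarrow> real) \<Rightarrow> bool" where
  "orthonormal_eigenbasis Q U lam \<longleftrightarrow>
     (\<forall>i j. U i \<bullet> U j = (if i = j then 1 else 0)) \<and> (\<forall>i. Q *v U i = lam i *\<^sub>R U i)"

lemma orthonormal_span_UNIV:
  fixes U :: "'n \<Rightarrow> real^'n"
  assumes orth: "\<And>i j. U i \<bullet> U j = (if i = j then 1 else 0)"
  shows "span (range U) = UNIV"
proof -
  have nz: "U i \<noteq> 0" for i using orth[of i i] by auto
  have "inj U" by (rule injI) (metis orth zero_neq_one)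
  then have "card (range U) = CARD('n)" by (simp add: card_image)
  moreover have "independent (range U)"
    using orth nz
    by (intro pairwise_orthogonal_independent) (auto simp: pairwise_def orthogonal_def)
  ultimately show ?thesis
    using card_ge_dim_independent[of "range U" UNIV] dim_subset_UNIV_cart[of UNIV] by auto
qed

lemma orthonormal_expansion:
  fixes U :: "'n \<Rightarrow> real^'n"
  assumes orth: "\<And>i j. U i \<bullet> U j = (if i = j then 1 else 0)"
  shows "x = (\<Sum>i\<in>UNIV. (U i \<bullet> x) *\<^sub>R U i)"
proof -
  define y where "y = x - (\<Sum>i\<in>UNIV. (U i \<bullet> x) *\<^sub>R U i)"
  have "orthogonal y (U j)" for j
  proof -
    have "U j \<bullet> (\<Sum>i\<in>UNIV. (U i \<bullet> x) *\<^sub>R U i) = (\<Sum>i\<in>UNIV. if i = j then U j \<bullet> x else 0)"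
      unfolding inner_sum_right by (rule sum.cong) (auto simp: orth)
    then show ?thesis by (simp add: y_def orthogonal_def inner_diff_left inner_diff_right inner_commute)
  qed
  then have "orthogonal y y"
    using orthogonal_to_span[of y "range U" y] orthonormal_span_UNIV[OF orth] by auto
  then show ?thesis by (simp add: y_def orthogonal_def)
qed

lemma orthonormal_norm_sq:
  fixes U :: "'n \<Rightarrow> real^'n"
  assumes orth: "\<And>i j. U i \<bullet> U j = (if i = j then 1 else 0)"
  shows "(norm x)\<^sup>2 = (\<Sum>i\<in>UNIV. (U i \<bullet> x)\<^sup>2)"
proof -
  have "(norm x)\<^sup>2 = x \<bullet> x" by (simp add: power2_norm_eq_inner)
  also have "\<dots> = (\<Sum>i\<in>UNIV. (U i \<bullet> x) *\<^sub>R U i) \<bullet> x"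
    by (subst (1) orthonormal_expansion[OF orth, of x]) (rule refl)
  also have "\<dots> = (\<Sum>i\<in>UNIV. (U i \<bullet> x)\<^sup>2)"
    by (simp add: inner_sum_left power2_eq_square)
  finally show ?thesis .
qed

theorem symmetric_matrix_orthonormal_eigenbasis:
  fixes Q :: "real^'n^'n"
  assumes sym: "transpose Q = Q"
  obtains U lam where "orthonormal_eigenbasis Q U lam"
proof -
  obtain B where B: "finite B" "pairwise orthogonal B" "span B = UNIV"
      "\<forall>u\<in>B. norm u = 1 \<and> Q *v u = (u \<bullet> (Q *v u)) *\<^sub>R u"
    using symmetric_invariant_subspace_eigenbasis[OF sym, of UNIV] by auto
  have "0 \<notin> B" using B(4) by force
  then have "card B = dim (UNIV :: (real^'n) set)"
    using B(2,3) pairwise_orthogonal_independent dim_span_eq_card_independent by metis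
  also have "\<dots> = CARD('n)" by simp
  finally obtain U where U: "bij_betw U (UNIV :: 'n set) B"
    using finite_same_card_bij[of "UNIV :: 'n set" B] B(1) by auto
  have "U i \<bullet> U j = (if i = j then 1 else 0)" for i j
  proof -
    have "U i \<in> B" "U j \<in> B" "i \<noteq> j \<Longrightarrow> U i \<noteq> U j"
      using bij_betwE[OF U] bij_betw_imp_inj_on[OF U] by (auto simp: inj_on_def)
    then show ?thesis using B(2,4) by (auto simp: pairwise_def orthogonal_def norm_eq_1)
  qed
  moreover have "Q *v U i = (U i \<bullet> (Q *v U i)) *\<^sub>R U i" for i
    using B(4) bij_betwE[OF U] by blast
  ultimately show ?thesis
    using that[of U "\<lambda>i. U i \<bullet> (Q *v U i)"] unfolding orthonormal_eigenbasis_def by blast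
qed

lemma orthonormal_eigenbasis_eigenvalue_iff:
  fixes Q :: "real^'n^'n"
  assumes sym: "transpose Q = Q" and E: "orthonormal_eigenbasis Q U lam"
  shows "mat_eigenvalue Q \<mu> \<longleftrightarrow> \<mu> \<in> range lam"
proof
  assume "mat_eigenvalue Q \<mu>"
  then obtain v where v: "v \<noteq> 0" "Q *v v = \<mu> *\<^sub>R v" unfolding mat_eigenvalue_def by blast
  have orth: "\<And>i j. U i \<bullet> U j = (if i = j then 1 else 0)" and eig: "\<And>i. Q *v U i = lam i *\<^sub>R U i"
    using E unfolding orthonormal_eigenbasis_def by auto
  have "\<mu> * (U i \<bullet> v) = lam i * (U i \<bullet> v)" for i
    using inner_matrix_vector_symmetric[OF sym, of "U i" v] v(2) eig[of i] by simp
  moreover obtain i where "U i \<bullet> v \<noteq> 0"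
    using orthonormal_expansion[OF orth, of v] v(1) by (metis (no_types, lifting) scale_zero_left sum.neutral)
  ultimately show "\<mu> \<in> range lam" by (metis mult_right_cancel rangeI)
next
  assume "\<mu> \<in> range lam"
  then obtain i where "\<mu> = lam i" by blast
  moreover have "U i \<noteq> 0" "Q *v U i = lam i *\<^sub>R U i"
    using E unfolding orthonormal_eigenbasis_def by (metis inner_zero_left zero_neq_one)+
  ultimately show "mat_eigenvalue Q \<mu>" unfolding mat_eigenvalue_def by blast
qed

section \<open>Second-order recurrences driven by white noise\<close>

fun lin_rec2 :: "real \<Rightarrow> real \<Rightarrow> real \<Rightarrow> real \<Rightarrow> nat \<Rightarrow> real" where
  "lin_rec2 p r a b 0 = a"
| "lin_rec2 p r a b (Suc 0) = b"
| "lin_rec2 p r a b (Suc (Suc n)) = p * lin_rec2 p r a b (Suc n) + r * lin_rec2 p r a b n"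

definition rec2_var :: "real \<Rightarrow> real \<Rightarrow> real" where
  "rec2_var p r = (1 - r) / ((1 + r) * (1 - r - p) * (1 - r + p))"

definition rec2_lyap :: "real \<Rightarrow> real \<Rightarrow> real \<Rightarrow> real \<Rightarrow> real" where
  "rec2_lyap p r x y =
     (1 + rec2_var p r * r\<^sup>2) * x\<^sup>2 + (2 * rec2_var p r * p * r / (1 - r)) * x * y + rec2_var p r * y\<^sup>2"

text \<open>With \<open>a = -r\<close> and \<open>b = -p\<close> these are the conditions \<open>h, d, l > 0\<close> of the paper, i.e. both
  roots of \<open>z\<^sup>2 = p z + r\<close> lie in the open unit disc.\<close>
locale rec2_stable =
  fixes p r :: real
  assumes h_pos: "0 < 1 + r" and d_pos: "0 < 1 - r - p" and l_pos: "0 < 1 - r + p"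
begin

lemma r_less_1: "r < 1"
  using d_pos l_pos by linarith

lemma rec2_var_pos: "rec2_var p r > 0"
  unfolding rec2_var_def using h_pos d_pos l_pos r_less_1 by simp

lemma rec2_lyap_step: "rec2_lyap p r y (p * y + r * x) = rec2_lyap p r x y - x\<^sup>2"
proof -
  define C where "C = rec2_var p r"
  define A where "A = 1 + C * r\<^sup>2"
  define B where "B = 2 * C * p * r / (1 - r)"
  have r1: "1 - r \<noteq> 0" using r_less_1 by simp
  have BC: "B * (1 - r) = 2 * C * p * r" unfolding B_def using r1 by simp
  have "(1 + r) * ((1 - r)\<^sup>2 - p\<^sup>2) = (1 + r) * (1 - r - p) * (1 - r + p)"
    by (simp add: algebra_simps power2_eq_square)
  then have C: "C * ((1 + r) * ((1 - r)\<^sup>2 - p\<^sup>2)) = 1 - r"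
    unfolding C_def rec2_var_def using h_pos d_pos l_pos by simp
  have "(A + B * p + C * p\<^sup>2 - C) * (1 - r) = (A + C * p\<^sup>2 - C) * (1 - r) + p * (B * (1 - r))"
    by (simp add: algebra_simps)
  also have "\<dots> = (1 - r) - C * ((1 + r) * ((1 - r)\<^sup>2 - p\<^sup>2))"
    unfolding BC A_def by (simp add: algebra_simps power2_eq_square)
  \<comment> \<open>The normalisation of \<open>rec2_var\<close> is exactly what makes the coefficient of \<open>y\<^sup>2\<close> vanish.\<close>
  finally have c1: "A + B * p + C * p\<^sup>2 - C = 0" using C r1 by simp
  have c2: "B * r + 2 * C * p * r - B = 0" using BC by (simp add: algebra_simps)
  have c3: "C * r\<^sup>2 - A + 1 = 0" unfolding A_def by simp
  have V: "rec2_lyap p r x y = A * x\<^sup>2 + B * x * y + C * y\<^sup>2" for x y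
    unfolding rec2_lyap_def A_def B_def C_def by simp
  have "rec2_lyap p r y (p * y + r * x) - (rec2_lyap p r x y - x\<^sup>2)
     = (A + B * p + C * p\<^sup>2 - C) * y\<^sup>2 + (B * r + 2 * C * p * r - B) * x * y + (C * r\<^sup>2 - A + 1) * x\<^sup>2"
    unfolding V by (simp add: algebra_simps power2_eq_square)
  then show ?thesis using c1 c2 c3 by simp
qed

lemma rec2_lyap_nonneg: "rec2_lyap p r x y \<ge> 0"
proof -
  define C where "C = rec2_var p r"
  define q where "q = p / (1 - r)"
  have C0: "C > 0" using rec2_var_pos C_def by simp
  have "\<bar>q\<bar> \<le> 1" unfolding q_def using d_pos l_pos r_less_1 by (simp add: abs_divide)
  then have q2: "q\<^sup>2 \<le> 1" by (simp add: abs_square_le_1)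
  have V: "rec2_lyap p r x y = (1 + C * r\<^sup>2) * x\<^sup>2 + (2 * C * r * q) * x * y + C * y\<^sup>2"
    unfolding rec2_lyap_def C_def q_def by simp
  have "C * rec2_lyap p r x y = (C * y + C * r * q * x)\<^sup>2 + (C + C\<^sup>2 * r\<^sup>2 * (1 - q\<^sup>2)) * x\<^sup>2"
    unfolding V by (simp add: algebra_simps power2_eq_square)
  also have "\<dots> \<ge> 0" using C0 q2 by simp
  finally show ?thesis using C0 by (simp add: zero_le_mult_iff)
qed

lemma sum_sq_lin_rec2:
  "(\<Sum>n<N. (lin_rec2 p r a b n)\<^sup>2)
     = rec2_lyap p r a b - rec2_lyap p r (lin_rec2 p r a b N) (lin_rec2 p r a b (Suc N))"
  by (induction N) (simp_all add: rec2_lyap_step)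

lemma summable_sq_lin_rec2: "summable (\<lambda>n. (lin_rec2 p r a b n)\<^sup>2)"
proof (rule summableI_nonneg_bounded)
  show "(\<Sum>n<N. (lin_rec2 p r a b n)\<^sup>2) \<le> rec2_lyap p r a b" for N
    unfolding sum_sq_lin_rec2 using rec2_lyap_nonneg by simp
qed simp

lemma lin_rec2_tendsto_0: "lin_rec2 p r a b \<longlonglongrightarrow> 0"
proof -
  have "(\<lambda>n. sqrt ((lin_rec2 p r a b n)\<^sup>2)) \<longlonglongrightarrow> sqrt 0"
    by (intro tendsto_real_sqrt summable_LIMSEQ_zero summable_sq_lin_rec2)
  then show ?thesis by (simp add: tendsto_rabs_zero_iff)
qed

lemma impulse_sq_sums: "(\<lambda>n. (lin_rec2 p r 0 1 n)\<^sup>2) sums rec2_var p r"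
proof -
  have "(\<lambda>N. rec2_lyap p r (lin_rec2 p r 0 1 N) (lin_rec2 p r 0 1 (Suc N))) \<longlonglongrightarrow> rec2_lyap p r 0 0"
    unfolding rec2_lyap_def
    by (intro tendsto_intros lin_rec2_tendsto_0 filterlim_compose[OF lin_rec2_tendsto_0 filterlim_Suc])
  then have "(\<lambda>N. rec2_lyap p r 0 1 - rec2_lyap p r (lin_rec2 p r 0 1 N) (lin_rec2 p r 0 1 (Suc N)))
      \<longlonglongrightarrow> rec2_lyap p r 0 1 - rec2_lyap p r 0 0"
    by (intro tendsto_diff tendsto_const)
  moreover have "rec2_lyap p r 0 1 - rec2_lyap p r 0 0 = rec2_var p r"
    by (simp add: rec2_lyap_def)
  ultimately show ?thesis unfolding sums_def sum_sq_lin_rec2 by simp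
qed

end

lemma lin_rec2_forced:
  assumes rec: "\<And>k. \<psi> (Suc (Suc k)) = p * \<psi> (Suc k) + r * \<psi> k + v k"
  shows "\<psi> k = lin_rec2 p r (\<psi> 0) (\<psi> 1) k + (\<Sum>j<k. lin_rec2 p r 0 1 (k - Suc j) * v j)"
proof (induction k rule: induct_nat_012)
  case (ge2 n)
  define G where "G = lin_rec2 p r 0 1"
  have "G (Suc n - j) = p * G (n - j) + r * G (n - Suc j)" if "j < n" for j
  proof -
    have "Suc n - j = Suc (Suc (n - Suc j))" "n - j = Suc (n - Suc j)" using that by auto
    then show ?thesis unfolding G_def by simp
  qed
  then have "(\<Sum>j<n. G (Suc n - j) * v j)
      = p * (\<Sum>j<n. G (n - j) * v j) + r * (\<Sum>j<n. G (n - Suc j) * v j)"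
    by (simp add: sum_distrib_left sum.distrib[symmetric] algebra_simps)
  then show ?case using ge2 rec[of n] by (simp add: G_def algebra_simps)
qed simp_all

definition unit_white_noise :: "'a measure \<Rightarrow> (nat \<Rightarrow> 'a \<Rightarrow> real) \<Rightarrow> bool" where
  "unit_white_noise M \<nu> \<longleftrightarrow> prob_space M
     \<and> (\<forall>j. integrable M (\<nu> j) \<and> (LINT \<omega>|M. \<nu> j \<omega>) = 0)
     \<and> (\<forall>i j. integrable M (\<lambda>\<omega>. \<nu> i \<omega> * \<nu> j \<omega>)
            \<and> (LINT \<omega>|M. \<nu> i \<omega> * \<nu> j \<omega>) = (if i = j then 1 else 0))"

lemma unit_white_noise_affine_second_moment:
  assumes noise: "unit_white_noise M \<nu>" and I: "finite I"
  shows "integrable M (\<lambda>\<omega>. (a + (\<Sum>j\<in>I. c j * \<nu> j \<omega>))\<^sup>2)"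
    and "(LINT \<omega>|M. (a + (\<Sum>j\<in>I. c j * \<nu> j \<omega>))\<^sup>2) = a\<^sup>2 + (\<Sum>j\<in>I. (c j)\<^sup>2)"
proof -
  have P: "prob_space M" using noise unfolding unit_white_noise_def by simp
  have i1: "integrable M (\<nu> j)" "(LINT \<omega>|M. \<nu> j \<omega>) = 0" for j
    using noise unfolding unit_white_noise_def by auto
  have i2: "integrable M (\<lambda>\<omega>. \<nu> i \<omega> * \<nu> j \<omega>)"
    "(LINT \<omega>|M. \<nu> i \<omega> * \<nu> j \<omega>) = (if i = j then 1 else 0)" for i j
    using noise unfolding unit_white_noise_def by auto
  define X where "X \<omega> = (\<Sum>j\<in>I. c j * \<nu> j \<omega>)" for \<omega>
  define Y where "Y \<omega> = (\<Sum>i\<in>I. \<Sum>j\<in>I. (c i * c j) * (\<nu> i \<omega> * \<nu> j \<omega>))" for \<omega>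
  have sq: "(a + (\<Sum>j\<in>I. c j * \<nu> j \<omega>))\<^sup>2 = a\<^sup>2 + (2 * a) * X \<omega> + Y \<omega>" for \<omega>
  proof -
    have "X \<omega> * X \<omega> = Y \<omega>" unfolding X_def Y_def sum_product by (simp add: algebra_simps)
    then show ?thesis unfolding X_def[symmetric] by (simp add: power2_eq_square algebra_simps)
  qed
  have iX: "integrable M X" and eX: "(LINT \<omega>|M. X \<omega>) = 0"
    unfolding X_def by (simp_all add: i1)
  have iY: "integrable M Y" and eY: "(LINT \<omega>|M. Y \<omega>) = (\<Sum>j\<in>I. (c j)\<^sup>2)"
    unfolding Y_def using I by (simp_all add: i2 power2_eq_square if_distrib cong: if_cong)
  have iC: "integrable M (\<lambda>\<omega>. a\<^sup>2)" using P by (simp add: prob_space.finite_measure finite_measure.integrable_const)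
  show "integrable M (\<lambda>\<omega>. (a + (\<Sum>j\<in>I. c j * \<nu> j \<omega>))\<^sup>2)"
    unfolding sq using iC iX iY by simp
  show "(LINT \<omega>|M. (a + (\<Sum>j\<in>I. c j * \<nu> j \<omega>))\<^sup>2) = a\<^sup>2 + (\<Sum>j\<in>I. (c j)\<^sup>2)"
    unfolding sq using iC iX iY eX eY P by (simp add: prob_space.prob_space)
qed

lemma (in rec2_stable) forced_rec2_second_moment_tendsto:
  assumes noise: "unit_white_noise M \<nu>"
    and rec: "\<And>k \<omega>. \<psi> (Suc (Suc k)) \<omega> = p * \<psi> (Suc k) \<omega> + r * \<psi> k \<omega> + \<sigma> * \<nu> k \<omega>"
    and init: "\<And>\<omega>. \<psi> 0 \<omega> = y0" "\<And>\<omega>. \<psi> (Suc 0) \<omega> = y1"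
  shows "integrable M (\<lambda>\<omega>. (\<psi> k \<omega>)\<^sup>2)"
    and "(\<lambda>k. LINT \<omega>|M. (\<psi> k \<omega>)\<^sup>2) \<longlonglongrightarrow> \<sigma>\<^sup>2 * rec2_var p r"
proof -
  define G where "G = lin_rec2 p r 0 1"
  have \<psi>: "\<psi> k \<omega> = lin_rec2 p r y0 y1 k + (\<Sum>j<k. (\<sigma> * G (k - Suc j)) * \<nu> j \<omega>)" for k \<omega>
    using lin_rec2_forced[of "\<lambda>k. \<psi> k \<omega>" p r "\<lambda>k. \<sigma> * \<nu> k \<omega>" k] rec init
    by (simp add: G_def algebra_simps)
  show "integrable M (\<lambda>\<omega>. (\<psi> k \<omega>)\<^sup>2)" for k
    unfolding \<psi> by (rule unit_white_noise_affine_second_moment[OF noise]) simp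
  have "(LINT \<omega>|M. (\<psi> k \<omega>)\<^sup>2) = (lin_rec2 p r y0 y1 k)\<^sup>2 + \<sigma>\<^sup>2 * (\<Sum>j<k. (G j)\<^sup>2)" for k
  proof -
    have "(\<Sum>j<k. (\<sigma> * G (k - Suc j))\<^sup>2) = \<sigma>\<^sup>2 * (\<Sum>j<k. (G (k - Suc j))\<^sup>2)"
      by (simp add: power_mult_distrib sum_distrib_left)
    also have "\<dots> = \<sigma>\<^sup>2 * (\<Sum>j<k. (G j)\<^sup>2)"
      using sum.nat_diff_reindex[of "\<lambda>j. (G j)\<^sup>2" k] by simp
    finally show ?thesis
      unfolding \<psi> by (simp add: unit_white_noise_affine_second_moment[OF noise])
  qed
  moreover have "(\<lambda>k. (lin_rec2 p r y0 y1 k)\<^sup>2 + \<sigma>\<^sup>2 * (\<Sum>j<k. (G j)\<^sup>2)) \<longlonglongrightarrow> 0\<^sup>2 + \<sigma>\<^sup>2 * rec2_var p r"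
    using impulse_sq_sums unfolding sums_def G_def by (intro tendsto_intros lin_rec2_tendsto_0)
  ultimately show "(\<lambda>k. LINT \<omega>|M. (\<psi> k \<omega>)\<^sup>2) \<longlonglongrightarrow> \<sigma>\<^sup>2 * rec2_var p r" by simp
qed

lemma cesaro_mean_tendsto_0:
  fixes b :: "nat \<Rightarrow> real"
  assumes b: "b \<longlonglongrightarrow> 0"
  shows "(\<lambda>t. (\<Sum>k\<le>t. b k) / real t) \<longlonglongrightarrow> 0"
proof (rule LIMSEQ_I)
  fix \<epsilon> :: real assume \<epsilon>: "0 < \<epsilon>"
  then obtain N where N: "\<And>k. k \<ge> N \<Longrightarrow> \<bar>b k\<bar> < \<epsilon> / 4"
    using LIMSEQ_D[OF b, of "\<epsilon> / 4"] by auto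
  define A where "A = (\<Sum>k<N. \<bar>b k\<bar>)"
  obtain T :: nat where T: "2 * A / \<epsilon> < T" using reals_Archimedean2 by blast
  have "\<bar>\<Sum>k\<le>t. b k\<bar> < real t * \<epsilon>" if t: "t \<ge> max 1 (max N T)" for t
  proof -
    have "{..t} = {..<N} \<union> {N..t}" using t by auto
    then have "(\<Sum>k\<le>t. \<bar>b k\<bar>) = A + (\<Sum>k\<in>{N..t}. \<bar>b k\<bar>)"
      unfolding A_def by (simp add: sum.union_disjoint[symmetric] ivl_disj_int_one(4))
    moreover have "(\<Sum>k\<in>{N..t}. \<bar>b k\<bar>) \<le> (\<Sum>k\<in>{N..t}. \<epsilon> / 4)"
      using N by (intro sum_mono) (simp add: less_imp_le)
    moreover have "(\<Sum>k\<in>{N..t}. \<epsilon> / 4) \<le> real t * (\<epsilon> / 2)"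
      using \<epsilon> t by simp
    moreover have "2 * A / \<epsilon> < real t" using T t by simp
    then have "A < real t * (\<epsilon> / 2)" using \<epsilon> by (simp add: field_simps)
    ultimately show ?thesis using sum_abs[of b "{..t}"] by linarith
  qed
  then have "norm ((\<Sum>k\<le>t. b k) / real t - 0) < \<epsilon>" if "t \<ge> max 1 (max N T)" for t
    using that by (simp add: divide_less_eq mult.commute)
  then show "\<exists>T. \<forall>t\<ge>T. norm ((\<Sum>k\<le>t. b k) / real t - 0) < \<epsilon>" by blast
qed
lemma cesaro_mean_tendsto:
  fixes a :: "nat \<Rightarrow> real"
  assumes "a \<longlonglongrightarrow> c"
  shows "(\<lambda>t. (1 / real t) * (\<Sum>k\<le>t. a k)) \<longlonglongrightarrow> c"
proof -
  have "(\<lambda>t. (\<Sum>k\<le>t. a k - c) / real t + real (Suc t) / real t * c) \<longlonglongrightarrow> 0 + 1 * c"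
    using assms by (intro tendsto_intros cesaro_mean_tendsto_0 LIMSEQ_Suc_n_over_n)
      (simp add: LIM_zero)
  moreover have "(\<Sum>k\<le>t. a k - c) / real t + real (Suc t) / real t * c = (1 / real t) * (\<Sum>k\<le>t. a k)" for t
    by (simp add: sum_subtractf diff_divide_distrib)
  ultimately show ?thesis by simp
qed

section \<open>The momentum iteration on a quadratic\<close>

lemma mom_iter_0 [simp]: "mom_iter \<alpha> \<beta> \<gamma> \<sigma> Q q w x0 x1 0 = x0"
  unfolding mom_iter_def by simp

lemma mom_iter_1 [simp]: "mom_iter \<alpha> \<beta> \<gamma> \<sigma> Q q w x0 x1 (Suc 0) = x1"
  unfolding mom_iter_def by simp

lemma mom_iter_Suc_Suc:
  "mom_iter \<alpha> \<beta> \<gamma> \<sigma> Q q w x0 x1 (Suc (Suc k)) =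
     (let a = mom_iter \<alpha> \<beta> \<gamma> \<sigma> Q q w x0 x1 k; b = mom_iter \<alpha> \<beta> \<gamma> \<sigma> Q q w x0 x1 (Suc k) in
      b + \<beta> *\<^sub>R (b - a) - \<alpha> *\<^sub>R quad_grad Q q (b + \<gamma> *\<^sub>R (b - a)) + \<sigma> *\<^sub>R w k)"
  unfolding mom_iter_def by (simp add: split_beta Let_def)

lemma posdef_matrix_inj:
  fixes Q :: "real^'n^'n"
  assumes pd: "\<forall>x. x \<noteq> 0 \<longrightarrow> x \<bullet> (Q *v x) > 0"
  shows "inj ((*v) Q)"
proof (rule injI)
  fix x y assume "Q *v x = Q *v y"
  then have "(x - y) \<bullet> (Q *v (x - y)) = 0" by (simp add: matrix_vector_mult_diff_distrib)
  then show "x = y" using pd by (metis less_irrefl right_minus_eq)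
qed

lemma quad_argmin_eq:
  fixes Q :: "real^'n^'n"
  assumes sym: "transpose Q = Q" and pd: "\<forall>x. x \<noteq> 0 \<longrightarrow> x \<bullet> (Q *v x) > 0"
    and xs: "Q *v xs = q"
  shows "quad_argmin Q q = xs"
proof -
  have gap: "quad_fun Q q y - quad_fun Q q xs = (1/2) * ((y - xs) \<bullet> (Q *v (y - xs)))" for y
    using inner_matrix_vector_symmetric[OF sym, of xs y]
    unfolding quad_fun_def xs[symmetric]
    by (simp add: matrix_vector_mult_diff_distrib inner_diff_left inner_diff_right inner_commute algebra_simps)
  have "(y - xs) \<bullet> (Q *v (y - xs)) \<ge> 0" for y
    using pd by (cases "y = xs") (auto intro: less_imp_le)
  then have "\<forall>y. quad_fun Q q xs \<le> quad_fun Q q y"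
    using gap by (metis diff_ge_0_iff_ge mult_nonneg_nonneg zero_le_divide_1_iff zero_le_numeral)
  moreover have "x = xs" if min: "\<forall>y. quad_fun Q q x \<le> quad_fun Q q y" for x
  proof (rule ccontr)
    assume "x \<noteq> xs"
    then have "(x - xs) \<bullet> (Q *v (x - xs)) > 0" using pd by simp
    then show False using min[rule_format, of xs] gap[of x] by simp
  qed
  ultimately show ?thesis unfolding quad_argmin_def by (rule the_equality)
qed

lemma quad_argmin_gradient_zero:
  fixes Q :: "real^'n^'n"
  assumes sym: "transpose Q = Q" and pd: "\<forall>x. x \<noteq> 0 \<longrightarrow> x \<bullet> (Q *v x) > 0"
  shows "Q *v quad_argmin Q q = q"
proof -
  have "surj ((*v) Q)"
    using linear_injective_imp_surjective[OF matrix_vector_mul_linear posdef_matrix_inj[OF pd]] by simp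
  then obtain xs where xs: "Q *v xs = q" by (metis surjD)
  then show ?thesis using quad_argmin_eq[OF sym pd xs] by simp
qed

lemma white_noise_project:
  fixes w :: "nat \<Rightarrow> 'a \<Rightarrow> real^'n"
  assumes noise: "white_noise M w" and u: "norm u = 1"
  shows "unit_white_noise M (\<lambda>j \<omega>. u \<bullet> w j \<omega>)"
proof -
  have P: "prob_space M" and i1: "\<And>t i. integrable M (\<lambda>\<omega>. w t \<omega> $ i)"
    and e1: "\<And>t i. (LINT \<omega>|M. w t \<omega> $ i) = 0"
    and i2: "\<And>t s i j. integrable M (\<lambda>\<omega>. w t \<omega> $ i * w s \<omega> $ j)"
    and e2: "\<And>t s i j. (LINT \<omega>|M. w t \<omega> $ i * w s \<omega> $ j) = (if t = s \<and> i = j then 1 else 0)"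
    using noise unfolding white_noise_def by auto
  have uu: "(\<Sum>i\<in>UNIV. u $ i * u $ i) = 1" using u by (simp add: norm_eq_1 inner_vec_def)
  have coord: "u \<bullet> w j \<omega> = (\<Sum>i\<in>UNIV. u $ i * w j \<omega> $ i)" for j \<omega> by (simp add: inner_vec_def)
  have prod: "(u \<bullet> w j \<omega>) * (u \<bullet> w k \<omega>)
      = (\<Sum>a\<in>UNIV. \<Sum>b\<in>UNIV. (u $ a * u $ b) * (w j \<omega> $ a * w k \<omega> $ b))" for j k \<omega>
    unfolding coord sum_product by (simp add: algebra_simps)
  have "integrable M (\<lambda>\<omega>. u \<bullet> w j \<omega>)" "(LINT \<omega>|M. u \<bullet> w j \<omega>) = 0" for j
    unfolding coord by (simp_all add: i1 e1)
  moreover have "integrable M (\<lambda>\<omega>. (u \<bullet> w j \<omega>) * (u \<bullet> w k \<omega>))" for j k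
    unfolding prod by (simp add: i2)
  moreover have "(LINT \<omega>|M. (u \<bullet> w j \<omega>) * (u \<bullet> w k \<omega>)) = (if j = k then 1 else 0)" for j k
    unfolding prod using uu by (simp add: i2 e2 if_distrib cong: if_cong)
  ultimately show ?thesis unfolding unit_white_noise_def using P by blast
qed

lemma momentum_eigen_coordinate:
  fixes Q :: "real^'n^'n" and \<alpha> \<beta> \<gamma> \<sigma> :: real and w :: "nat \<Rightarrow> real^'n" and x0 x1 :: "real^'n"
  assumes sym: "transpose Q = Q" and xs: "Q *v xs = q" and u: "Q *v u = lam *\<^sub>R u"
  defines "\<psi> k \<equiv> u \<bullet> (mom_iter \<alpha> \<beta> \<gamma> \<sigma> Q q w x0 x1 k - xs)"
  shows "\<psi> (Suc (Suc k))
    = (1 + \<beta> - (1 + \<gamma>) * \<alpha> * lam) * \<psi> (Suc k) + (\<gamma> * \<alpha> * lam - \<beta>) * \<psi> k + \<sigma> * (u \<bullet> w k)"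
proof -
  have grad: "u \<bullet> quad_grad Q q y = lam * (u \<bullet> y - u \<bullet> xs)" for y
    using inner_matrix_vector_symmetric[OF sym, of u "y - xs"] u
    by (simp add: quad_grad_def xs[symmetric] matrix_vector_mult_diff_distrib inner_diff_right
        right_diff_distrib)
  have "\<psi> (Suc (Suc k)) = \<psi> (Suc k) + \<beta> * (\<psi> (Suc k) - \<psi> k)
      - \<alpha> * lam * (\<psi> (Suc k) + \<gamma> * (\<psi> (Suc k) - \<psi> k)) + \<sigma> * (u \<bullet> w k)"
    unfolding \<psi>_def mom_iter_Suc_Suc Let_def inner_add_right inner_diff_right inner_scaleR_right grad
    by (simp add: algebra_simps)
  then show ?thesis by (simp add: algebra_simps)
qed

lemma Jhat_eq_rec2_var:
  "Jhat \<alpha> \<beta> \<gamma> \<sigma> lam = \<sigma>\<^sup>2 * rec2_var (1 + \<beta> - (1 + \<gamma>) * \<alpha> * lam) (\<gamma> * \<alpha> * lam - \<beta>)"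
proof -
  define p r where "p = 1 + \<beta> - (1 + \<gamma>) * \<alpha> * lam" and "r = \<gamma> * \<alpha> * lam - \<beta>"
  have "Jhat \<alpha> \<beta> \<gamma> \<sigma> lam = (2 * (\<sigma>\<^sup>2 * (1 - r))) / (2 * ((1 + r) * (1 - r - p) * (1 - r + p)))"
    unfolding Jhat_def Let_def p_def r_def by (simp add: algebra_simps)
  also have "\<dots> = \<sigma>\<^sup>2 * rec2_var p r"
    unfolding rec2_var_def by (subst mult_divide_mult_cancel_left) simp_all
  finally show ?thesis unfolding p_def r_def .
qed

lemma noise_avg_tendsto_sum_Jhat:
  fixes Q :: "real^'n^'n" and w :: "nat \<Rightarrow> 'a \<Rightarrow> real^'n"
  assumes sym: "transpose Q = Q" and pd: "\<forall>x. x \<noteq> 0 \<longrightarrow> x \<bullet> (Q *v x) > 0"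
    and E: "orthonormal_eigenbasis Q U lam"
    and stable: "\<And>i. rec2_stable (1 + \<beta> - (1 + \<gamma>) * \<alpha> * lam i) (\<gamma> * \<alpha> * lam i - \<beta>)"
    and noise: "white_noise M w"
  shows "noise_avg M w \<alpha> \<beta> \<gamma> \<sigma> Q q x0 x1 \<longlonglongrightarrow> (\<Sum>i\<in>UNIV. Jhat \<alpha> \<beta> \<gamma> \<sigma> (lam i))"
proof -
  define xs where "xs = quad_argmin Q q"
  have xs: "Q *v xs = q" unfolding xs_def by (rule quad_argmin_gradient_zero[OF sym pd])
  have orth: "\<And>i j. U i \<bullet> U j = (if i = j then 1 else 0)" and eig: "\<And>i. Q *v U i = lam i *\<^sub>R U i"
    using E unfolding orthonormal_eigenbasis_def by auto
  define X where "X k \<omega> = mom_iter \<alpha> \<beta> \<gamma> \<sigma> Q q (\<lambda>s. w s \<omega>) x0 x1 k" for k \<omega>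
  define \<psi> where "\<psi> i k \<omega> = U i \<bullet> (X k \<omega> - xs)" for i k \<omega>
  have int: "integrable M (\<lambda>\<omega>. (\<psi> i k \<omega>)\<^sup>2)"
    and lim: "(\<lambda>k. LINT \<omega>|M. (\<psi> i k \<omega>)\<^sup>2) \<longlonglongrightarrow> Jhat \<alpha> \<beta> \<gamma> \<sigma> (lam i)" for i k
  proof -
    have noise_i: "unit_white_noise M (\<lambda>j \<omega>. U i \<bullet> w j \<omega>)"
      using orth[of i i] by (intro white_noise_project[OF noise]) (simp add: norm_eq_1)
    have rec_i: "\<psi> i (Suc (Suc k)) \<omega> = (1 + \<beta> - (1 + \<gamma>) * \<alpha> * lam i) * \<psi> i (Suc k) \<omega>
        + (\<gamma> * \<alpha> * lam i - \<beta>) * \<psi> i k \<omega> + \<sigma> * (U i \<bullet> w k \<omega>)" for k \<omega>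
      unfolding \<psi>_def X_def by (rule momentum_eigen_coordinate[OF sym xs eig])
    have init_i: "\<psi> i 0 \<omega> = U i \<bullet> (x0 - xs)" "\<psi> i (Suc 0) \<omega> = U i \<bullet> (x1 - xs)" for \<omega>
      by (simp_all add: \<psi>_def X_def)
    note mode = rec2_stable.forced_rec2_second_moment_tendsto[OF stable noise_i rec_i init_i]
    show "integrable M (\<lambda>\<omega>. (\<psi> i k \<omega>)\<^sup>2)" by (rule mode(1))
    show "(\<lambda>k. LINT \<omega>|M. (\<psi> i k \<omega>)\<^sup>2) \<longlonglongrightarrow> Jhat \<alpha> \<beta> \<gamma> \<sigma> (lam i)"
      unfolding Jhat_eq_rec2_var by (rule mode(2))
  qed
  have "(LINT \<omega>|M. (norm (X k \<omega> - xs))\<^sup>2) = (\<Sum>i\<in>UNIV. LINT \<omega>|M. (\<psi> i k \<omega>)\<^sup>2)" for k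
    unfolding orthonormal_norm_sq[OF orth] \<psi>_def[symmetric] using int by simp
  then have "(\<lambda>k. LINT \<omega>|M. (norm (X k \<omega> - xs))\<^sup>2) \<longlonglongrightarrow> (\<Sum>i\<in>UNIV. Jhat \<alpha> \<beta> \<gamma> \<sigma> (lam i))"
    using lim by (simp add: tendsto_sum)
  then show ?thesis
    unfolding noise_avg_def X_def[symmetric] xs_def[symmetric] by (rule cesaro_mean_tendsto)
qed

section \<open>Spectra of the class\<close>

definition class_spectrum :: "real \<Rightarrow> real \<Rightarrow> ('n \<Rightarrow> real) \<Rightarrow> bool" where
  "class_spectrum m L lam \<longleftrightarrow> (\<forall>i. m \<le> lam i \<and> lam i \<le> L) \<and> m \<in> range lam \<and> L \<in> range lam"

lemma orthonormal_eigenbasis_quadratic_form: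
  fixes Q :: "real^'n^'n"
  assumes sym: "transpose Q = Q" and E: "orthonormal_eigenbasis Q U lam"
  shows "x \<bullet> (Q *v x) = (\<Sum>i\<in>UNIV. lam i * (U i \<bullet> x)\<^sup>2)"
proof -
  have orth: "\<And>i j. U i \<bullet> U j = (if i = j then 1 else 0)" and eig: "\<And>i. Q *v U i = lam i *\<^sub>R U i"
    using E unfolding orthonormal_eigenbasis_def by auto
  have "x \<bullet> (Q *v x) = (\<Sum>i\<in>UNIV. (U i \<bullet> x) *\<^sub>R U i) \<bullet> (Q *v x)"
    by (subst (1) orthonormal_expansion[OF orth, of x]) (rule refl)
  also have "\<dots> = (\<Sum>i\<in>UNIV. (U i \<bullet> x) * (U i \<bullet> (Q *v x)))"
    by (simp add: inner_sum_left)
  also have "\<dots> = (\<Sum>i\<in>UNIV. lam i * (U i \<bullet> x)\<^sup>2)"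
    by (simp add: inner_matrix_vector_symmetric[OF sym] eig power2_eq_square mult_ac)
  finally show ?thesis .
qed

lemma quad_class_eigenbasis:
  fixes Q :: "real^'n^'n"
  assumes "(Q, q) \<in> quad_class m L"
  obtains U lam where "orthonormal_eigenbasis Q U lam" "class_spectrum m L lam"
proof -
  have sym: "transpose Q = Q" and ev: "mat_eigenvalue Q m" "mat_eigenvalue Q L"
    and bounds: "\<And>\<mu>. mat_eigenvalue Q \<mu> \<Longrightarrow> m \<le> \<mu> \<and> \<mu> \<le> L"
    using assms unfolding quad_class_def by auto
  obtain U lam where E: "orthonormal_eigenbasis Q U lam"
    using symmetric_matrix_orthonormal_eigenbasis[OF sym] by blast
  note eigenvalue = orthonormal_eigenbasis_eigenvalue_iff[OF sym E]
  have "class_spectrum m L lam"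
    unfolding class_spectrum_def using bounds ev by (auto simp: eigenvalue)
  then show ?thesis using that E by blast
qed

lemma quad_class_of_eigenbasis:
  fixes Q :: "real^'n^'n"
  assumes sym: "transpose Q = Q" and E: "orthonormal_eigenbasis Q U lam"
    and m0: "0 < m" and spec: "class_spectrum m L lam"
  shows "(Q, q) \<in> quad_class m L"
proof -
  have orth: "\<And>i j. U i \<bullet> U j = (if i = j then 1 else 0)"
    using E unfolding orthonormal_eigenbasis_def by auto
  have "x \<bullet> (Q *v x) > 0" if "x \<noteq> 0" for x
  proof -
    have "m * (norm x)\<^sup>2 \<le> (\<Sum>i\<in>UNIV. lam i * (U i \<bullet> x)\<^sup>2)"
      unfolding orthonormal_norm_sq[OF orth] sum_distrib_left
      using spec by (intro sum_mono mult_right_mono) (auto simp: class_spectrum_def)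
    moreover have "m * (norm x)\<^sup>2 > 0" using m0 that by simp
    ultimately show ?thesis unfolding orthonormal_eigenbasis_quadratic_form[OF sym E] by linarith
  qed
  moreover note eigenvalue = orthonormal_eigenbasis_eigenvalue_iff[OF sym E]
  ultimately show ?thesis
    using sym spec unfolding quad_class_def class_spectrum_def by (auto simp: eigenvalue)
qed

definition diag_matrix :: "('n \<Rightarrow> real) \<Rightarrow> real^'n^'n" where
  "diag_matrix d = (\<chi> i j. if i = j then d i else 0)"

lemma transpose_diag_matrix: "transpose (diag_matrix d) = diag_matrix d"
  unfolding diag_matrix_def transpose_def by (simp add: vec_eq_iff)

lemma diag_matrix_mult: "diag_matrix d *v v = (\<chi> i. d i * v $ i)"
proof -
  have "(\<Sum>j\<in>UNIV. (if i = j then d i else 0) * v $ j) = (\<Sum>j\<in>UNIV. if i = j then d i * v $ j else 0)" for i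
    by (rule sum.cong) auto
  then show ?thesis unfolding diag_matrix_def matrix_vector_mult_def by (simp add: vec_eq_iff)
qed

lemma orthonormal_eigenbasis_diag_matrix: "orthonormal_eigenbasis (diag_matrix d) (\<lambda>i. axis i 1) d"
proof -
  have "diag_matrix d *v axis i 1 = d i *\<^sub>R axis i 1" for i
    by (simp add: diag_matrix_mult vec_eq_iff axis_def)
  then show ?thesis unfolding orthonormal_eigenbasis_def by (simp add: inner_axis_axis)
qed

lemma quad_class_noise_avg_tendsto:
  fixes Q :: "real^'n^'n" and w :: "nat \<Rightarrow> 'a \<Rightarrow> real^'n"
  assumes Qq: "(Q, q) \<in> quad_class m L"
    and stable: "\<And>lam. m \<le> lam \<Longrightarrow> lam \<le> L \<Longrightarrow>
      rec2_stable (1 + \<beta> - (1 + \<gamma>) * \<alpha> * lam) (\<gamma> * \<alpha> * lam - \<beta>)"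
    and noise: "white_noise M w"
  obtains lam :: "'n \<Rightarrow> real" where "class_spectrum m L lam"
    "noise_avg M w \<alpha> \<beta> \<gamma> \<sigma> Q q x0 x1 \<longlonglongrightarrow> (\<Sum>i\<in>UNIV. Jhat \<alpha> \<beta> \<gamma> \<sigma> (lam i))"
proof -
  obtain U lam where E: "orthonormal_eigenbasis Q U lam" and spec: "class_spectrum m L lam"
    using quad_class_eigenbasis[OF Qq] by blast
  have sym: "transpose Q = Q" and pd: "\<forall>x. x \<noteq> 0 \<longrightarrow> x \<bullet> (Q *v x) > 0"
    using Qq unfolding quad_class_def by auto
  have "noise_avg M w \<alpha> \<beta> \<gamma> \<sigma> Q q x0 x1 \<longlonglongrightarrow> (\<Sum>i\<in>UNIV. Jhat \<alpha> \<beta> \<gamma> \<sigma> (lam i))"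
    using spec by (intro noise_avg_tendsto_sum_Jhat[OF sym pd E _ noise] stable)
      (auto simp: class_spectrum_def)
  then show ?thesis using that spec by blast
qed

lemma diag_matrix_noise_avg_tendsto:
  fixes w :: "nat \<Rightarrow> 'a \<Rightarrow> real^'n" and lam :: "'n \<Rightarrow> real"
  assumes m0: "0 < m" and spec: "class_spectrum m L lam"
    and stable: "\<And>lam. m \<le> lam \<Longrightarrow> lam \<le> L \<Longrightarrow>
      rec2_stable (1 + \<beta> - (1 + \<gamma>) * \<alpha> * lam) (\<gamma> * \<alpha> * lam - \<beta>)"
    and noise: "white_noise M w"
  shows "(diag_matrix lam, q) \<in> quad_class m L"
    and "noise_avg M w \<alpha> \<beta> \<gamma> \<sigma> (diag_matrix lam) q x0 x1 \<longlonglongrightarrow> (\<Sum>i\<in>UNIV. Jhat \<alpha> \<beta> \<gamma> \<sigma> (lam i))"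
proof -
  note E = orthonormal_eigenbasis_diag_matrix[of lam]
  show Qq: "(diag_matrix lam, q) \<in> quad_class m L"
    by (rule quad_class_of_eigenbasis[OF transpose_diag_matrix E m0 spec])
  then have "\<forall>x. x \<noteq> 0 \<longrightarrow> x \<bullet> (diag_matrix lam *v x) > 0"
    unfolding quad_class_def by auto
  then show "noise_avg M w \<alpha> \<beta> \<gamma> \<sigma> (diag_matrix lam) q x0 x1 \<longlonglongrightarrow> (\<Sum>i\<in>UNIV. Jhat \<alpha> \<beta> \<gamma> \<sigma> (lam i))"
    using spec stable unfolding class_spectrum_def
    by (intro noise_avg_tendsto_sum_Jhat[OF transpose_diag_matrix _ E _ noise]) auto
qed

lemma noise_amp_image_quad_class:
  fixes w :: "nat \<Rightarrow> 'a \<Rightarrow> real^'n" and x0 x1 :: "real^'n"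
  assumes m0: "0 < m"
    and stable: "\<And>lam. m \<le> lam \<Longrightarrow> lam \<le> L \<Longrightarrow>
      rec2_stable (1 + \<beta> - (1 + \<gamma>) * \<alpha> * lam) (\<gamma> * \<alpha> * lam - \<beta>)"
    and noise: "white_noise M w"
  shows "\<forall>(Q, q) \<in> quad_class m L. convergent (noise_avg M w \<alpha> \<beta> \<gamma> \<sigma> Q q x0 x1)"
    and "(\<lambda>(Q, q). noise_amp M w \<alpha> \<beta> \<gamma> \<sigma> Q q x0 x1) ` (quad_class m L :: ((real^'n^'n) \<times> (real^'n)) set)
      = {\<Sum>i\<in>UNIV. Jhat \<alpha> \<beta> \<gamma> \<sigma> (lam i) | lam :: 'n \<Rightarrow> real. class_spectrum m L lam}"
proof -
  show "\<forall>(Q, q) \<in> quad_class m L. convergent (noise_avg M w \<alpha> \<beta> \<gamma> \<sigma> Q q x0 x1)"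
    by (auto intro: convergentI elim: quad_class_noise_avg_tendsto[OF _ stable noise])
  have "\<exists>lam :: 'n \<Rightarrow> real. noise_amp M w \<alpha> \<beta> \<gamma> \<sigma> Q q x0 x1 = (\<Sum>i\<in>UNIV. Jhat \<alpha> \<beta> \<gamma> \<sigma> (lam i))
      \<and> class_spectrum m L lam"
    if Qq: "(Q, q) \<in> quad_class m L" for Q :: "real^'n^'n" and q
  proof -
    obtain lam :: "'n \<Rightarrow> real" where spec: "class_spectrum m L lam"
      and lim: "noise_avg M w \<alpha> \<beta> \<gamma> \<sigma> Q q x0 x1 \<longlonglongrightarrow> (\<Sum>i\<in>UNIV. Jhat \<alpha> \<beta> \<gamma> \<sigma> (lam i))"
      by (rule quad_class_noise_avg_tendsto[OF Qq stable noise])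
    then show ?thesis using spec limI[OF lim] unfolding noise_amp_def by blast
  qed
  moreover have "\<exists>Qq \<in> quad_class m L. (\<Sum>i\<in>UNIV. Jhat \<alpha> \<beta> \<gamma> \<sigma> (lam i))
      = (\<lambda>(Q, q). noise_amp M w \<alpha> \<beta> \<gamma> \<sigma> Q q x0 x1) Qq"
    if spec: "class_spectrum m L lam" for lam :: "'n \<Rightarrow> real"
    using diag_matrix_noise_avg_tendsto(1)[OF m0 spec stable noise, where q = 0]
      limI[OF diag_matrix_noise_avg_tendsto(2)[OF m0 spec stable noise, where q = 0]]
    by (intro bexI[of _ "(diag_matrix lam, 0)"]) (auto simp: noise_amp_def)
  ultimately show "(\<lambda>(Q, q). noise_amp M w \<alpha> \<beta> \<gamma> \<sigma> Q q x0 x1) ` (quad_class m L :: ((real^'n^'n) \<times> (real^'n)) set)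
      = {\<Sum>i\<in>UNIV. Jhat \<alpha> \<beta> \<gamma> \<sigma> (lam i) | lam :: 'n \<Rightarrow> real. class_spectrum m L lam}"
    by (auto simp: image_iff)
qed

section \<open>Extremal spectral sums\<close>

lemma sum_remove_two:
  fixes f :: "'a \<Rightarrow> real"
  assumes A: "finite A" "a \<in> A" "b \<in> A" "a \<noteq> b"
  shows "sum f A = f a + f b + sum f (A - {a, b})"
    and "real (card (A - {a, b})) = real (card A) - 2"
proof -
  have "sum f A = f a + sum f (A - {a})" using A by (intro sum.remove) auto
  also have "sum f (A - {a}) = f b + sum f (A - {a} - {b})" using A by (intro sum.remove) auto
  also have "A - {a} - {b} = A - {a, b}" by auto
  finally show "sum f A = f a + f b + sum f (A - {a, b})" by simp
  have "card {a, b} \<le> card A" using A by (intro card_mono) auto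
  then show "real (card (A - {a, b})) = real (card A) - 2"
    using A by (simp add: card_Diff_subset of_nat_diff)
qed

lemma exists_other_index:
  assumes "CARD('n) \<ge> 2"
  obtains j :: "'n::finite" where "j \<noteq> i"
proof -
  have "\<not> (\<forall>a b :: 'n. a = b)"
    using assms card_le_Suc0_iff_eq[of "UNIV :: 'n set"] by simp
  then obtain a b :: 'n where "a \<noteq> b" by blast
  then show ?thesis using that by (metis (full_types))
qed

lemma class_spectrum_sum_le:
  fixes J :: "real \<Rightarrow> real" and lam :: "'n::finite \<Rightarrow> real"
  assumes "class_spectrum m L lam" and "\<And>x. m \<le> x \<Longrightarrow> x \<le> L \<Longrightarrow> J x \<le> J m"
  shows "(\<Sum>i\<in>UNIV. J (lam i)) \<le> real CARD('n) * J m"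
  using assms sum_bounded_above[of UNIV "\<lambda>i. J (lam i)" "J m"] by (simp add: class_spectrum_def)

lemma class_spectrum_sum_ge:
  fixes J :: "real \<Rightarrow> real" and lam :: "'n::finite \<Rightarrow> real"
  assumes n: "CARD('n) \<ge> 2" and spec: "class_spectrum m L lam" and JL: "J L = J m"
    and c: "\<And>x. m \<le> x \<Longrightarrow> x \<le> L \<Longrightarrow> J c \<le> J x"
  shows "2 * J m + (real CARD('n) - 2) * J c \<le> (\<Sum>i\<in>UNIV. J (lam i))"
proof -
  have range: "m \<le> lam k" "lam k \<le> L" for k using spec unfolding class_spectrum_def by auto
  obtain i where i: "lam i = m" using spec unfolding class_spectrum_def by auto
  obtain j where j: "j \<noteq> i" "J (lam j) = J m"
  proof (cases "m = L")
    case True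
    obtain j where "j \<noteq> i" using exists_other_index[OF n] .
    moreover have "lam j = m" using range[of j] True by simp
    ultimately show ?thesis using that by blast
  next
    case False
    obtain j where "lam j = L" using spec unfolding class_spectrum_def by auto
    then show ?thesis using that[of j] i False JL by auto
  qed
  have split: "(\<Sum>k\<in>UNIV. J (lam k)) = J (lam i) + J (lam j) + (\<Sum>k\<in>UNIV - {i, j}. J (lam k))"
    by (rule sum_remove_two(1)) (use j(1) in auto)
  have card: "real (card (UNIV - {i, j})) = real CARD('n) - 2"
    by (rule sum_remove_two(2)) (use j(1) in auto)
  have "real (card (UNIV - {i, j})) * J c \<le> (\<Sum>k\<in>UNIV - {i, j}. J (lam k))"
    using c range by (intro sum_bounded_below) auto
  then have "(real CARD('n) - 2) * J c \<le> (\<Sum>k\<in>UNIV - {i, j}. J (lam k))" unfolding card .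
  moreover have "J (lam i) = J m" using i by simp
  ultimately show ?thesis using split j(2) by linarith
qed

lemma class_spectrum_witness:
  fixes J :: "real \<Rightarrow> real"
  assumes n: "CARD('n) \<ge> 2" and c: "m \<le> c" "c \<le> L"
  obtains lam :: "'n::finite \<Rightarrow> real" where "class_spectrum m L lam"
    "(\<Sum>i\<in>UNIV. J (lam i)) = J m + J L + (real CARD('n) - 2) * J c"
proof -
  obtain i :: 'n where True by blast
  obtain j where ij: "j \<noteq> i" using exists_other_index[OF n] .
  define lam where "lam k = (if k = i then m else if k = j then L else c)" for k
  have "m \<le> lam k \<and> lam k \<le> L" for k using c unfolding lam_def by auto
  moreover have lam_ij: "lam i = m" "lam j = L" using ij unfolding lam_def by auto
  ultimately have "class_spectrum m L lam" unfolding class_spectrum_def by (metis rangeI)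
  moreover have "(\<Sum>k\<in>UNIV. J (lam k)) = J (lam i) + J (lam j) + (\<Sum>k\<in>UNIV - {i, j}. J (lam k))"
    by (rule sum_remove_two(1)) (use ij in auto)
  moreover have "(\<Sum>k\<in>UNIV - {i, j}. J (lam k)) = (real CARD('n) - 2) * J c"
  proof -
    have "(\<Sum>k\<in>UNIV - {i, j}. J (lam k)) = (\<Sum>k\<in>UNIV - {i, j}. J c)"
      by (rule sum.cong) (auto simp: lam_def)
    also have "\<dots> = real (card (UNIV - {i, j})) * J c" by (rule sum_constant)
    also have "real (card (UNIV - {i, j})) = real CARD('n) - 2"
      by (rule sum_remove_two(2)) (use ij in auto)
    finally show ?thesis .
  qed
  ultimately show ?thesis using lam_ij by (intro that) simp_all
qed

lemma class_spectrum_sum_extrema: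
  fixes J :: "real \<Rightarrow> real"
  assumes n: "CARD('n::finite) \<ge> 2" and c: "m \<le> c" "c \<le> L" and JL: "J L = J m"
    and bounds: "\<forall>x\<in>{m..L}. J c \<le> J x \<and> J x \<le> J m"
  defines "S \<equiv> {\<Sum>i\<in>UNIV. J (lam i) | lam :: 'n \<Rightarrow> real. class_spectrum m L lam}"
  shows "real CARD('n) * J m \<in> S" and "\<forall>v\<in>S. v \<le> real CARD('n) * J m"
    and "2 * J m + (real CARD('n) - 2) * J c \<in> S"
    and "\<forall>v\<in>S. 2 * J m + (real CARD('n) - 2) * J c \<le> v"
proof -
  have mL: "m \<le> L" using c by linarith
  obtain lam :: "'n \<Rightarrow> real" where "class_spectrum m L lam"
    "(\<Sum>i\<in>UNIV. J (lam i)) = J m + J L + (real CARD('n) - 2) * J m"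
    by (rule class_spectrum_witness[where J = J, OF n order.refl mL])
  moreover have "J m + J L + (real CARD('n) - 2) * J m = real CARD('n) * J m"
    unfolding JL by (simp add: algebra_simps)
  ultimately show "real CARD('n) * J m \<in> S" unfolding S_def by (metis (mono_tags, lifting) mem_Collect_eq)
  obtain lam :: "'n \<Rightarrow> real" where "class_spectrum m L lam"
    "(\<Sum>i\<in>UNIV. J (lam i)) = J m + J L + (real CARD('n) - 2) * J c"
    by (rule class_spectrum_witness[where J = J, OF n c])
  moreover have "J m + J L + (real CARD('n) - 2) * J c = 2 * J m + (real CARD('n) - 2) * J c"
    unfolding JL by simp
  ultimately show "2 * J m + (real CARD('n) - 2) * J c \<in> S" unfolding S_def by (metis (mono_tags, lifting) mem_Collect_eq)
  show "\<forall>v\<in>S. v \<le> real CARD('n) * J m"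
  proof
    fix v assume "v \<in> S"
    then obtain lam :: "'n \<Rightarrow> real" where "class_spectrum m L lam" "v = (\<Sum>i\<in>UNIV. J (lam i))"
      unfolding S_def by blast
    then show "v \<le> real CARD('n) * J m" using class_spectrum_sum_le[of m L lam J] bounds by simp
  qed
  show "\<forall>v\<in>S. 2 * J m + (real CARD('n) - 2) * J c \<le> v"
  proof
    fix v assume "v \<in> S"
    then obtain lam :: "'n \<Rightarrow> real" where "class_spectrum m L lam" "v = (\<Sum>i\<in>UNIV. J (lam i))"
      unfolding S_def by blast
    then show "2 * J m + (real CARD('n) - 2) * J c \<le> v"
      using class_spectrum_sum_ge[where J = J and lam = lam and c = c, OF n _ JL] bounds by simp
  qed
qed

section \<open>Symmetric tuning\<close>

lemma Jhat_zero_momentum: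
  "Jhat \<alpha> \<beta> 0 \<sigma> lam = \<sigma>\<^sup>2 * (1 + \<beta>) / ((1 - \<beta>) * (\<alpha> * lam * (2 * (1 + \<beta>) - \<alpha> * lam)))"
proof -
  have "Jhat \<alpha> \<beta> 0 \<sigma> lam
      = (2 * (\<sigma>\<^sup>2 * (1 + \<beta>))) / (2 * ((1 - \<beta>) * (\<alpha> * lam * (2 * (1 + \<beta>) - \<alpha> * lam))))"
    unfolding Jhat_def Let_def by (simp add: algebra_simps)
  then show ?thesis by (subst (asm) mult_divide_mult_cancel_left) simp_all
qed

locale symmetric_tuning =
  fixes m L \<alpha> \<beta> :: real
  assumes m_pos: "0 < m" and m_le_L: "m \<le> L" and \<alpha>_pos: "0 < \<alpha>" and \<beta>_bound: "\<bar>\<beta>\<bar> < 1"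
    and balance: "\<alpha> * (m + L) = 2 * (1 + \<beta>)"

lemma tuned_momentum_symmetric:
  fixes m L \<kappa> \<rho> c \<alpha> \<beta> :: real
  assumes mL: "0 < m" "m \<le> L" and kap: "\<kappa> = L / m" and rho: "0 < \<rho>" "\<rho> < 1"
    and c_def: "c = (\<kappa> - (1 + \<rho>) / (1 - \<rho>)) / (\<rho> * (\<kappa> + (1 + \<rho>) / (1 - \<rho>)))"
    and al: "\<alpha> = (1 + \<rho>) * (1 + c * \<rho>) / L" and be: "\<beta> = c * \<rho>\<^sup>2"
  shows "symmetric_tuning m L \<alpha> \<beta>"
proof
  define r where "r = (1 + \<rho>) / (1 - \<rho>)"
  have r0: "0 < r" and r: "r * (1 - \<rho>) = 1 + \<rho>" using rho by (simp_all add: r_def)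
  have k0: "0 < \<kappa>" and L: "L = \<kappa> * m" using mL by (simp_all add: kap)
  have s: "c * \<rho> = (\<kappa> - r) / (\<kappa> + r)"
    using rho unfolding c_def r_def[symmetric] by simp
  have s1: "1 + c * \<rho> = 2 * \<kappa> / (\<kappa> + r)" unfolding s using k0 r0 by (simp add: field_simps)
  have s2: "\<bar>c * \<rho>\<bar> < 1" unfolding s using k0 r0 by (simp add: abs_less_iff field_simps)
  show "0 < m" "m \<le> L" by (fact mL)+
  show "\<bar>\<beta>\<bar> < 1"
    using s2 rho mult_strict_mono[of "\<bar>c * \<rho>\<bar>" 1 \<rho> 1] by (simp add: be power2_eq_square abs_mult)
  show "0 < \<alpha>" unfolding al s1 using rho k0 r0 mL by simp
  have "1 + \<beta> = (\<kappa> * (1 + \<rho>) + r * (1 - \<rho>)) / (\<kappa> + r)"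
    unfolding be power2_eq_square mult.assoc[symmetric] s using k0 r0 by (simp add: field_simps)
  also have "\<dots> = (1 + \<rho>) * (\<kappa> + 1) / (\<kappa> + r)" unfolding r by (simp add: algebra_simps)
  finally have \<beta>1: "1 + \<beta> = (1 + \<rho>) * (\<kappa> + 1) / (\<kappa> + r)" .
  have ratio: "(m + L) / L = (\<kappa> + 1) / \<kappa>" unfolding L using mL k0 by (simp add: field_simps)
  have "\<alpha> * (m + L) = (1 + \<rho>) * (1 + c * \<rho>) * ((m + L) / L)" unfolding al by simp
  also have "\<dots> = (1 + \<rho>) * (2 * \<kappa> / (\<kappa> + r)) * ((\<kappa> + 1) / \<kappa>)"
    by (simp only: s1 ratio)
  also have "\<dots> = 2 * (1 + \<beta>)"
    unfolding \<beta>1 using k0 r0 by (simp add: field_simps add_pos_pos less_imp_neq[symmetric])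
  finally show "\<alpha> * (m + L) = 2 * (1 + \<beta>)" .
qed

context symmetric_tuning
begin

lemma stable_modes:
  assumes "m \<le> lam" "lam \<le> L"
  shows "rec2_stable (1 + \<beta> - \<alpha> * lam) (- \<beta>)"
proof
  have "\<alpha> * m \<le> \<alpha> * lam" "\<alpha> * lam \<le> \<alpha> * L" using assms \<alpha>_pos by simp_all
  moreover have "0 < \<alpha> * m" using \<alpha>_pos m_pos by simp
  ultimately show "0 < 1 - - \<beta> - (1 + \<beta> - \<alpha> * lam)" "0 < 1 - - \<beta> + (1 + \<beta> - \<alpha> * lam)"
    using balance by (simp_all add: algebra_simps)
  show "0 < 1 + - \<beta>" using \<beta>_bound by simp
qed

lemma Jhat_L: "Jhat \<alpha> \<beta> 0 \<sigma> L = Jhat \<alpha> \<beta> 0 \<sigma> m"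
proof -
  have "2 * (1 + \<beta>) - \<alpha> * L = \<alpha> * m" "2 * (1 + \<beta>) - \<alpha> * m = \<alpha> * L"
    using balance by (simp_all add: algebra_simps)
  then show ?thesis unfolding Jhat_zero_momentum by (simp add: algebra_simps)
qed

lemma Jhat_bounds:
  assumes lam: "m \<le> lam" "lam \<le> L"
  shows "Jhat \<alpha> \<beta> 0 \<sigma> lam \<le> Jhat \<alpha> \<beta> 0 \<sigma> m"
    and "Jhat \<alpha> \<beta> 0 \<sigma> ((m + L) / 2) \<le> Jhat \<alpha> \<beta> 0 \<sigma> lam"
proof -
  define f where "f x = x * (\<alpha> * m + \<alpha> * L - x)" for x
  have J: "Jhat \<alpha> \<beta> 0 \<sigma> x = \<sigma>\<^sup>2 * (1 + \<beta>) / (1 - \<beta>) / f (\<alpha> * x)" for x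
    unfolding Jhat_zero_momentum f_def balance[symmetric] by (simp add: algebra_simps)
  have N: "\<sigma>\<^sup>2 * (1 + \<beta>) / (1 - \<beta>) \<ge> 0" using \<beta>_bound by simp
  have "\<alpha> * m \<le> \<alpha> * lam" "\<alpha> * lam \<le> \<alpha> * L" using lam \<alpha>_pos by simp_all
  moreover have "f (\<alpha> * lam) - f (\<alpha> * m) = (\<alpha> * lam - \<alpha> * m) * (\<alpha> * L - \<alpha> * lam)"
    unfolding f_def by (simp add: algebra_simps)
  ultimately have f1: "f (\<alpha> * m) \<le> f (\<alpha> * lam)"
    using mult_nonneg_nonneg[of "\<alpha> * lam - \<alpha> * m" "\<alpha> * L - \<alpha> * lam"] by linarith
  have "f (\<alpha> * ((m + L) / 2)) - f (\<alpha> * lam) = (\<alpha> * lam - \<alpha> * (m + L) / 2)\<^sup>2"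
    unfolding f_def by (simp add: algebra_simps power2_eq_square)
  then have f2: "f (\<alpha> * lam) \<le> f (\<alpha> * ((m + L) / 2))"
    using zero_le_power2[of "\<alpha> * lam - \<alpha> * (m + L) / 2"] by linarith
  have f0: "0 < f (\<alpha> * m)" unfolding f_def using \<alpha>_pos m_pos m_le_L by simp
  show "Jhat \<alpha> \<beta> 0 \<sigma> lam \<le> Jhat \<alpha> \<beta> 0 \<sigma> m"
    unfolding J using N f0 f1 by (intro divide_left_mono) auto
  show "Jhat \<alpha> \<beta> 0 \<sigma> ((m + L) / 2) \<le> Jhat \<alpha> \<beta> 0 \<sigma> lam"
    unfolding J using N f0 f1 f2 by (intro divide_left_mono) auto
qed

lemma Jhat_midpoint: "Jhat \<alpha> \<beta> 0 \<sigma> ((m + L) / 2) = \<sigma>\<^sup>2 / ((1 + \<beta>) * (1 - \<beta>))"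
proof -
  have "\<alpha> * ((m + L) / 2) = 1 + \<beta>" using balance by (simp add: algebra_simps)
  then have "Jhat \<alpha> \<beta> 0 \<sigma> ((m + L) / 2) = ((1 + \<beta>) * \<sigma>\<^sup>2) / ((1 + \<beta>) * ((1 + \<beta>) * (1 - \<beta>)))"
    unfolding Jhat_zero_momentum by (simp add: algebra_simps)
  also have "\<dots> = \<sigma>\<^sup>2 / ((1 + \<beta>) * (1 - \<beta>))"
    using \<beta>_bound by (intro mult_divide_mult_cancel_left) simp
  finally show ?thesis .
qed

lemma Jhat_m: "Jhat \<alpha> \<beta> 0 \<sigma> m = \<sigma>\<^sup>2 * (L / m + 1) / (2 * (1 - \<beta>) * (\<alpha> * L))"
proof -
  have nz: "\<alpha> * m \<noteq> 0" "\<alpha> * L \<noteq> 0" "1 - \<beta> \<noteq> 0" using \<alpha>_pos m_pos m_le_L \<beta>_bound by auto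
  have "2 * (1 + \<beta>) - \<alpha> * m = \<alpha> * L" using balance by (simp add: algebra_simps)
  then have "Jhat \<alpha> \<beta> 0 \<sigma> m = \<sigma>\<^sup>2 * (1 + \<beta>) / ((1 - \<beta>) * (\<alpha> * m * (\<alpha> * L)))"
    unfolding Jhat_zero_momentum by simp
  also have "1 + \<beta> = (\<alpha> * m + \<alpha> * L) / 2" using balance by (simp add: algebra_simps)
  also have "\<sigma>\<^sup>2 * ((\<alpha> * m + \<alpha> * L) / 2) / ((1 - \<beta>) * (\<alpha> * m * (\<alpha> * L)))
      = \<sigma>\<^sup>2 * ((\<alpha> * m + \<alpha> * L) / (\<alpha> * m)) / (2 * (1 - \<beta>) * (\<alpha> * L))"
    using nz by (simp add: field_simps)
  also have "(\<alpha> * m + \<alpha> * L) / (\<alpha> * m) = L / m + 1" using nz by (simp add: field_simps)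
  finally show ?thesis .
qed

end

theorem corollary2:
  fixes M :: "'a measure" and w :: "nat \<Rightarrow> 'a \<Rightarrow> real^'n"
    and m L \<kappa> \<rho> c \<alpha> \<beta> \<gamma> \<sigma>\<^sub>w :: real
    and x0 x1 :: "real^'n"
  assumes n2: "CARD('n) \<ge> 2"
    and mL: "0 < m" "m \<le> L"
    and kap: "\<kappa> = L / m"
    and rho: "0 < \<rho>" "\<rho> < 1" "1 / (1 - \<rho>) \<ge> (sqrt \<kappa> + 1) / 2"
    and c_def: "c = (\<kappa> - (1 + \<rho>) / (1 - \<rho>)) / (\<rho> * (\<kappa> + (1 + \<rho>) / (1 - \<rho>)))"
    and params: "\<alpha> = (1 + \<rho>) * (1 + c * \<rho>) / L" "\<beta> = c * \<rho>\<^sup>2" "\<gamma> = 0"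
    and sig: "\<sigma>\<^sub>w \<ge> 0"
    and noise: "white_noise M w"
  shows
    "(\<forall>(Q, q) \<in> quad_class m L.
        convergent (noise_avg M w \<alpha> \<beta> \<gamma> \<sigma>\<^sub>w Q q x0 x1))
   \<and> (let Js = (\<lambda>(Q, q). noise_amp M w \<alpha> \<beta> \<gamma> \<sigma>\<^sub>w Q q x0 x1) ` (quad_class m L :: ((real^'n^'n) \<times> (real^'n)) set);
          n = real CARD('n); lamh = (m + L) / 2
      in
        real CARD('n) * Jhat \<alpha> \<beta> \<gamma> \<sigma>\<^sub>w m \<in> Js \<and> (\<forall>v \<in> Js. v \<le> n * Jhat \<alpha> \<beta> \<gamma> \<sigma>\<^sub>w m)
      \<and> n * Jhat \<alpha> \<beta> \<gamma> \<sigma>\<^sub>w m = n * Jhat \<alpha> \<beta> \<gamma> \<sigma>\<^sub>w L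
      \<and> 2 * Jhat \<alpha> \<beta> \<gamma> \<sigma>\<^sub>w m + (n - 2) * Jhat \<alpha> \<beta> \<gamma> \<sigma>\<^sub>w lamh \<in> Js
      \<and> (\<forall>v \<in> Js. 2 * Jhat \<alpha> \<beta> \<gamma> \<sigma>\<^sub>w m + (n - 2) * Jhat \<alpha> \<beta> \<gamma> \<sigma>\<^sub>w lamh \<le> v)
      \<and> Jhat \<alpha> \<beta> \<gamma> \<sigma>\<^sub>w m = \<sigma>\<^sub>w\<^sup>2 * (\<kappa> + 1) / (2 * (1 - c * \<rho>\<^sup>2) * (1 + \<rho>) * (1 + c * \<rho>))
      \<and> Jhat \<alpha> \<beta> \<gamma> \<sigma>\<^sub>w lamh = \<sigma>\<^sub>w\<^sup>2 / ((1 + c * \<rho>\<^sup>2) * (1 - c * \<rho>\<^sup>2)))"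
proof -
  interpret symmetric_tuning m L \<alpha> \<beta>
    by (rule tuned_momentum_symmetric[OF mL kap rho(1,2) c_def params(1,2)])
  have stable: "rec2_stable (1 + \<beta> - (1 + 0) * \<alpha> * lam) (0 * \<alpha> * lam - \<beta>)"
    if "m \<le> lam" "lam \<le> L" for lam
    using stable_modes[OF that] by simp
  have conv: "\<forall>(Q, q) \<in> quad_class m L. convergent (noise_avg M w \<alpha> \<beta> \<gamma> \<sigma>\<^sub>w Q q x0 x1)"
    unfolding params(3) by (rule noise_amp_image_quad_class(1)[OF m_pos stable noise])
  have Js: "(\<lambda>(Q, q). noise_amp M w \<alpha> \<beta> \<gamma> \<sigma>\<^sub>w Q q x0 x1) ` (quad_class m L :: ((real^'n^'n) \<times> (real^'n)) set)
      = {\<Sum>i\<in>UNIV. Jhat \<alpha> \<beta> 0 \<sigma>\<^sub>w (lam i) | lam :: 'n \<Rightarrow> real. class_spectrum m L lam}"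
    unfolding params(3) by (rule noise_amp_image_quad_class(2)[OF m_pos stable noise])
  have bounds: "\<forall>x\<in>{m..L}. Jhat \<alpha> \<beta> 0 \<sigma>\<^sub>w ((m + L) / 2) \<le> Jhat \<alpha> \<beta> 0 \<sigma>\<^sub>w x
      \<and> Jhat \<alpha> \<beta> 0 \<sigma>\<^sub>w x \<le> Jhat \<alpha> \<beta> 0 \<sigma>\<^sub>w m"
    using Jhat_bounds by auto
  have "m \<le> (m + L) / 2" "(m + L) / 2 \<le> L" using mL by simp_all
  note extrema = class_spectrum_sum_extrema[OF n2 this Jhat_L bounds]
  have "\<alpha> * L = (1 + \<rho>) * (1 + c * \<rho>)" using params(1) m_pos m_le_L by simp
  then have "Jhat \<alpha> \<beta> 0 \<sigma>\<^sub>w m = \<sigma>\<^sub>w\<^sup>2 * (\<kappa> + 1) / (2 * (1 - c * \<rho>\<^sup>2) * (1 + \<rho>) * (1 + c * \<rho>))"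
    using Jhat_m[of "\<sigma>\<^sub>w"] by (simp add: kap params(2) mult.assoc)
  then show ?thesis
    unfolding Let_def Js using conv extrema Jhat_L Jhat_midpoint[of "\<sigma>\<^sub>w"]
    by (simp add: params(2,3))
qed

end
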